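(* Let $T$ be a rooted binary phylogenetic $X$-tree with $|X|=n\geq 2$. Then there exist strictly positive edge lengths $\lambda_1,\ldots,\lambda_{2n-2}$ for $T$ such that (i) the ranking $\pi_T$ is strict, and (ii) deleting the leaf $y=\arg\min_{x\in X}FP_T(x)$ yields a tree $\widetilde T=T_{\widetilde X}$ on $\widetilde X=X\setminus\{y\}$ whose ranking $\pi_{\widetilde T}$ is strict and satisfies $\arg\max_{x\in\widetilde X}FP_{\widetilde T}(x)=\arg\min_{x\in\widetilde X}FP_T(x)$; i.e. the leaf with the second lowest $FP_T$ value has the highest $FP_{\widetilde T}$ value.
   Context: A rooted binary phylogenetic $X$-tree ($X$ finite, $|X|=n$) is a rooted tree whose root $\rho$ has in-degree 0 and out-degree 2, all edges directed away from $\rho$, all other interior vertices have in-degree 1 and out-degree 2, and whose leaves are bijectively labelled by $X$ (for $|X|=1$ it may be a single vertex); it has $2n-2$ edges. Every edge $e$ has a strictly positive length $\lambda_e$. The Fair Proportion index of $x\in X$ is $FP_T(x)=\sum_{e\in P(T;\rho,x)}\lambda_e/D_e$, where $P(T;\rho,x)$ is the path from $\rho$ to $x$ and $D_e$ is the number of leaves descended from $e$. For $Y\subseteq X$, the induced subtree $T_Y$ is obtained from the minimal subtree of $T$ connecting $Y$ by suppressing all non-root vertices of in- and out-degree 1, adding the lengths of merged edges; if the root then has out-degree 1, it and its incident edge are deleted. The ranking $\pi_T$ orders $X$ by decreasing $FP_T$; it is strict if all values $FP_T(x)$ are pairwise distinct. *)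

theory Defs
  imports Complex_Main
begin

datatype 'a tree = Leaf 'a | Node "'a tree" "'a tree"

text \<open>Trees with edge lengths: WNode a l b r has an edge of length a to the
left subtree l and an edge of length b to the right subtree r.  Every edge of
the tree is exactly one such child edge, so a tree with n leaves has 2n-2 edges.\<close>
datatype 'a wtree = WLeaf 'a | WNode real "'a wtree" real "'a wtree"

fun shape :: "'a wtree \<Rightarrow> 'a tree" where
  "shape (WLeaf x) = Leaf x"
| "shape (WNode a l b r) = Node (shape l) (shape r)"

fun tleaves :: "'a tree \<Rightarrow> 'a list" where
  "tleaves (Leaf x) = [x]"
| "tleaves (Node l r) = tleaves l @ tleaves r"

fun wleaves :: "'a wtree \<Rightarrow> 'a set" where
  "wleaves (WLeaf x) = {x}"
| "wleaves (WNode a l b r) = wleaves l \<union> wleaves r"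

fun pos_lengths :: "'a wtree \<Rightarrow> bool" where
  "pos_lengths (WLeaf x) = True"
| "pos_lengths (WNode a l b r) = (a > 0 \<and> b > 0 \<and> pos_lengths l \<and> pos_lengths r)"

text \<open>Fair Proportion index: sum over the edges e on the root-to-x path of
lambda_e / D_e, with D_e the number of leaves below e.\<close>
fun FP :: "'a wtree \<Rightarrow> 'a \<Rightarrow> real" where
  "FP (WLeaf y) x = 0"
| "FP (WNode a l b r) x =
     (if x \<in> wleaves l then a / real (card (wleaves l)) + FP l x
      else if x \<in> wleaves r then b / real (card (wleaves r)) + FP r x
      else 0)"

text \<open>Induced subtree. induce_e Y a t handles the subtree t hanging below an
edge of (accumulated) length a: it returns None if t contains no leaf of Y,
otherwise the (accumulated) length of the edge above the restricted subtree
together with the restricted subtree; degree-2 vertices are suppressed by adding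
lengths of merged edges.\<close>
fun induce_e :: "'a set \<Rightarrow> real \<Rightarrow> 'a wtree \<Rightarrow> (real \<times> 'a wtree) option" where
  "induce_e Y a (WLeaf x) = (if x \<in> Y then Some (a, WLeaf x) else None)"
| "induce_e Y a (WNode b l c r) =
     (case (induce_e Y b l, induce_e Y c r) of
        (Some (b', l'), Some (c', r')) \<Rightarrow> Some (a, WNode b' l' c' r')
      | (Some (b', l'), None) \<Rightarrow> Some (a + b', l')
      | (None, Some (c', r')) \<Rightarrow> Some (a + c', r')
      | (None, None) \<Rightarrow> None)"

text \<open>T_Y: the edge accumulated above the top is discarded (this deletes the root
and its incident edge if the root has out-degree 1).\<close>
definition induce :: "'a set \<Rightarrow> 'a wtree \<Rightarrow> 'a wtree option" where
  "induce Y t = map_option snd (induce_e Y 0 t)"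

end

theory Submission imports Defs begin

text \<open>Fix a cherry {y, z} of T and let N be the number of leaves. Put an edge of
length 8N above the cherry and pendant edges of lengths 1 and 2 below it, so that
FP(y) and FP(z) are about 4N. Every other leaf lies in a subtree H hanging off the
path from the root to the cherry; the path edges get length 1, and the edge into
H is chosen so that the FP values of H form a band above 5N, above the bands of all
subtrees hanging lower. A path edge shifts values by at most 1, so the bands stay
disjoint and below 8N. Deleting y merges the cherry edge with the pendant edge of
z, which is then no longer shared: FP(z) jumps to at least 8N + 2, above every
other leaf.\<close>

lemma finite_wleaves [simp]: "finite (wleaves W)"
  by (induction W) auto

lemma wleaves_nonempty: "wleaves W \<noteq> {}"
  by (induction W) auto

lemma set_tleaves_shape: "set (tleaves (shape W)) = wleaves W"
  by (induction W) auto

lemma card_wleaves_eq_length: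
  "distinct (tleaves (shape W)) \<Longrightarrow> card (wleaves W) = length (tleaves (shape W))"
  by (metis distinct_card set_tleaves_shape)

lemma length_tleaves_pos: "1 \<le> length (tleaves S)"
  by (induction S) auto

lemma length_tleaves_le_1E:
  assumes "length (tleaves S) \<le> 1"
  obtains u where "S = Leaf u"
proof (cases S)
  case (Node l r)
  then show ?thesis using assms length_tleaves_pos[of l] length_tleaves_pos[of r] by simp
qed (rule that)

lemma inj_on_translate:
  assumes "inj_on f A" and "\<And>x. x \<in> A \<Longrightarrow> g x = (c::real) + f x"
  shows "inj_on g A"
  using assms unfolding inj_on_def by (metis add_left_cancel)

lemma inj_on_insert_below:
  "inj_on f A \<Longrightarrow> \<forall>x \<in> A. f a < (f x :: 'b :: order) \<Longrightarrow> inj_on f (insert a A)"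
  unfolding inj_on_insert image_iff by (metis Diff_iff less_irrefl)

lemma inj_on_insert_above:
  "inj_on f A \<Longrightarrow> \<forall>x \<in> A. f x < (f a :: 'b :: order) \<Longrightarrow> inj_on f (insert a A)"
  unfolding inj_on_insert image_iff by (metis Diff_iff less_irrefl)

lemma inj_on_Un_of_less:
  assumes "inj_on f A" "inj_on f B" "\<And>a b. a \<in> A \<Longrightarrow> b \<in> B \<Longrightarrow> f a < (f b :: real)"
  shows "inj_on f (A \<union> B)"
  using assms unfolding inj_on_def by (metis Un_iff less_irrefl)

lemma wleaves_induce_e_case:
  "(case induce_e Y a W of None \<Rightarrow> wleaves W \<inter> Y = {}
     | Some (a', W') \<Rightarrow> wleaves W' = wleaves W \<inter> Y)"
proof (induction W arbitrary: a)
  case (WNode b l c r)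
  have l: "case induce_e Y b l of None \<Rightarrow> wleaves l \<inter> Y = {}
     | Some (a', W') \<Rightarrow> wleaves W' = wleaves l \<inter> Y" by (rule WNode.IH(1))
  have r: "case induce_e Y c r of None \<Rightarrow> wleaves r \<inter> Y = {}
     | Some (a', W') \<Rightarrow> wleaves W' = wleaves r \<inter> Y" by (rule WNode.IH(2))
  show ?case
    using l r by (cases "induce_e Y b l"; cases "induce_e Y c r") auto
qed simp

lemma wleaves_induce_e:
  "induce_e Y a W = Some (a', W') \<Longrightarrow> wleaves W' = wleaves W \<inter> Y"
  using wleaves_induce_e_case[where Y=Y and a=a and W=W] by simp

lemma induce_e_all: "wleaves W \<subseteq> Y \<Longrightarrow> induce_e Y a W = Some (a, W)"
  by (induction W arbitrary: a) auto

lemma induce_e_cong: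
  "Y \<inter> wleaves W = Y' \<inter> wleaves W \<Longrightarrow> induce_e Y a W = induce_e Y' a W"
proof (induction W arbitrary: a)
  case (WNode b l c r)
  have "induce_e Y b l = induce_e Y' b l" "induce_e Y c r = induce_e Y' c r"
    using WNode.prems by (intro WNode.IH; auto)+
  then show ?case by simp
qed auto

lemma induce_e_shift:
  "induce_e Y a W = map_option (\<lambda>(a', W'). (a + a', W')) (induce_e Y 0 W)"
  by (cases W) (auto split: option.splits)

lemma induce_conv_induce_e: "induce Y W = map_option snd (induce_e Y a W)"
  unfolding induce_def by (subst induce_e_shift[of _ a]) (cases "induce_e Y 0 W"; auto)

text \<open>FP values inside the subtree W hanging below an edge of length a, the edge
being shared by all leaves of W.\<close>
definition planted_FP :: "real \<Rightarrow> 'a wtree \<Rightarrow> 'a \<Rightarrow> real" where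
  "planted_FP a W x = a / real (card (wleaves W)) + FP W x"

lemma planted_FP_less_iff [simp]: "planted_FP a W x < planted_FP a W x' \<longleftrightarrow> FP W x < FP W x'"
  by (simp add: planted_FP_def)

lemma inj_on_planted_FP_iff [simp]: "inj_on (planted_FP a W) A \<longleftrightarrow> inj_on (FP W) A"
  by (simp add: planted_FP_def inj_on_def)

lemma FP_WNode_sibling:
  assumes "Q \<in> {WNode a A b B, WNode b B a A}" "wleaves A \<inter> wleaves B = {}" "x \<in> wleaves A"
  shows "FP Q x = planted_FP a A x"
  using assms by (auto simp: planted_FP_def)

lemma planted_FP_WNode_sibling:
  assumes "Q \<in> {WNode a A b B, WNode b B a A}" "wleaves A \<inter> wleaves B = {}" "x \<in> wleaves A"
  shows "planted_FP c Q x = c / real (card (wleaves A) + card (wleaves B)) + planted_FP a A x"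
proof -
  have "wleaves Q = wleaves A \<union> wleaves B"
    using assms(1) by auto
  then have "card (wleaves Q) = card (wleaves A) + card (wleaves B)"
    using assms(2) by (simp add: card_Un_disjoint)
  then show ?thesis using FP_WNode_sibling[OF assms] by (simp add: planted_FP_def)
qed

lemma exists_injective_weighting_below:
  assumes "distinct (tleaves S)" "0 < e"
  shows "\<exists>W. shape W = S \<and> pos_lengths W \<and> inj_on (FP W) (wleaves W) \<and>
             (\<forall>x \<in> wleaves W. 0 \<le> FP W x \<and> FP W x < e)"
  using assms
proof (induction S arbitrary: e)
  case (Leaf x)
  then show ?case by (intro exI[of _ "WLeaf x"]) simp
next
  case (Node l r)
  have "distinct (tleaves l)" "distinct (tleaves r)" "0 < e/3"
    using Node.prems by simp_all
  obtain Wl where Wl: "shape Wl = l" "pos_lengths Wl" "inj_on (FP Wl) (wleaves Wl)"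
    "\<forall>x \<in> wleaves Wl. 0 \<le> FP Wl x \<and> FP Wl x < e/3"
    using Node.IH(1)[OF \<open>distinct (tleaves l)\<close> \<open>0 < e/3\<close>] by blast
  obtain Wr where Wr: "shape Wr = r" "pos_lengths Wr" "inj_on (FP Wr) (wleaves Wr)"
    "\<forall>x \<in> wleaves Wr. 0 \<le> FP Wr x \<and> FP Wr x < e/3"
    using Node.IH(2)[OF \<open>distinct (tleaves r)\<close> \<open>0 < e/3\<close>] by blast
  have disj: "wleaves Wl \<inter> wleaves Wr = {}"
    using Node.prems(1) Wl(1) Wr(1) by (auto simp: set_tleaves_shape[symmetric])
  have cards: "0 < card (wleaves Wl)" "0 < card (wleaves Wr)"
    by (simp_all add: card_gt_0_iff wleaves_nonempty)
  define W where "W = WNode (card (wleaves Wl) * (e/3)) Wl (card (wleaves Wr) * (2*e/3)) Wr"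
  have FPl: "x \<in> wleaves Wl \<Longrightarrow> FP W x = e/3 + FP Wl x"
    and FPr: "x' \<in> wleaves Wr \<Longrightarrow> FP W x' = 2*e/3 + FP Wr x'" for x x'
    using disj cards by (auto simp: W_def)
  show ?case
  proof (intro exI[of _ W] conjI)
    show "shape W = Node l r" "pos_lengths W"
      using Wl Wr Node.prems(2) cards by (simp_all add: W_def)
    have leaves: "wleaves W = wleaves Wl \<union> wleaves Wr" by (simp add: W_def)
    show "inj_on (FP W) (wleaves W)"
      unfolding leaves
    proof (rule inj_on_Un_of_less)
      show "inj_on (FP W) (wleaves Wl)" by (rule inj_on_translate[OF Wl(3) FPl])
      show "inj_on (FP W) (wleaves Wr)" by (rule inj_on_translate[OF Wr(3) FPr])
      show "FP W x < FP W x'" if "x \<in> wleaves Wl" "x' \<in> wleaves Wr" for x x'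
        using that FPl[OF that(1)] FPr[OF that(2)] Wl(4) Wr(4) by force
    qed
    show "\<forall>x \<in> wleaves W. 0 \<le> FP W x \<and> FP W x < e"
    proof
      fix x assume "x \<in> wleaves W"
      then consider "x \<in> wleaves Wl" | "x \<in> wleaves Wr" unfolding leaves by blast
      then show "0 \<le> FP W x \<and> FP W x < e"
        using FPl FPr Wl(4) Wr(4) Node.prems(2) by cases force+
    qed
  qed
qed

text \<open>The invariant of the construction for the planted FP values F before and G
after deleting y, with N bounding the number of leaves of the final tree.\<close>
definition swap_profile ::
    "real \<Rightarrow> ('a \<Rightarrow> real) \<Rightarrow> ('a \<Rightarrow> real) \<Rightarrow> 'a set \<Rightarrow> 'a \<Rightarrow> 'a \<Rightarrow> bool" where
  "swap_profile N F G L y z \<longleftrightarrow>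
     F y < F z \<and> F z \<le> 4*N + card L \<and> 8*N + 2 \<le> G z \<and>
     inj_on F (L - {y, z}) \<and> inj_on G (L - {y, z}) \<and>
     (\<forall>x \<in> L - {y, z}. 5*N < F x \<and> F x < 5*N + 3 * card L \<and> G x < 5*N + 3 * card L)"

lemma swap_profile_extend:
  fixes F G F' G' f :: "'a \<Rightarrow> real"
  assumes profile: "swap_profile N F G T y z" and "y \<in> T" "z \<in> T" "y \<noteq> z"
    and "finite T" "finite H" "T \<inter> H = {}" "H \<noteq> {}" "real (card T + card H) \<le> N"
    and f: "inj_on f H" "\<forall>x \<in> H. 0 \<le> f x \<and> f x < 1"
    and "0 \<le> s" "s \<le> 1" "0 \<le> s'" "s' \<le> 1" and c: "c = 5*N + 3 * card T + 1"
    and F': "\<And>x. x \<in> T \<Longrightarrow> F' x = s + F x" "\<And>x. x \<in> H \<Longrightarrow> F' x = s + c + f x"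
    and G': "\<And>x. x \<in> T - {y} \<Longrightarrow> G' x = s' + G x" "\<And>x. x \<in> H \<Longrightarrow> G' x = s' + c + f x"
  shows "swap_profile N F' G' (T \<union> H) y z"
proof -
  have card: "card (T \<union> H) = card T + card H" "1 \<le> card H"
    using assms by (simp_all add: card_Un_disjoint Suc_le_eq card_gt_0_iff)
  have rest: "(T \<union> H) - {y, z} = (T - {y, z}) \<union> H"
    using assms by auto
  note old = profile[unfolded swap_profile_def]
  have F_old: "F x < 5*N + 3 * card T" if "x \<in> T" for x
    using old that \<open>1 \<le> card H\<close> \<open>real (card T + card H) \<le> N\<close> by (cases "x \<in> {y, z}") auto
  have pair: "F' y < F' z" "F' z \<le> 4*N + card (T \<union> H)" "8*N + 2 \<le> G' z"
    using old F' G' assms card by auto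
  have inj_F': "inj_on F' ((T \<union> H) - {y, z})"
    unfolding rest
  proof (rule inj_on_Un_of_less)
    show "inj_on F' (T - {y, z})"
      using old F'(1) by (auto intro: inj_on_translate)
    show "inj_on F' H" using f(1) F'(2) by (rule inj_on_translate)
    show "F' a < F' b" if "a \<in> T - {y, z}" "b \<in> H" for a b
      using F_old[of a] f(2) F' that c \<open>s \<le> 1\<close> \<open>0 \<le> s\<close> by force
  qed
  have inj_G': "inj_on G' ((T \<union> H) - {y, z})"
    unfolding rest
  proof (rule inj_on_Un_of_less)
    show "inj_on G' (T - {y, z})"
      using old G'(1) by (auto intro: inj_on_translate)
    show "inj_on G' H" using f(1) G'(2) by (rule inj_on_translate)
    show "G' a < G' b" if "a \<in> T - {y, z}" "b \<in> H" for a b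
      using old f(2) G' that c \<open>s' \<le> 1\<close> \<open>0 \<le> s'\<close> by force
  qed
  have bounds: "5*N < F' x \<and> F' x < 5*N + 3 * card (T \<union> H) \<and> G' x < 5*N + 3 * card (T \<union> H)"
    if x: "x \<in> (T \<union> H) - {y, z}" for x
  proof (cases "x \<in> H")
    case False
    with x have "x \<in> T - {y, z}" by blast
    moreover from this have "5*N < F x" "F x < 5*N + 3 * card T" "G x < 5*N + 3 * card T"
      using old by auto
    ultimately show ?thesis
      using F'(1) G'(1) card assms(12-15) by auto
  next
    case True
    then show ?thesis
      using f(2) F'(2) G'(2) c card assms(12-15) by force
  qed
  show ?thesis
    unfolding swap_profile_def using pair inj_F' inj_G' bounds by blast
qed

definition swapping_weighting :: "real \<Rightarrow> real \<Rightarrow> 'a wtree \<Rightarrow> 'a \<Rightarrow> 'a \<Rightarrow> bool" where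
  "swapping_weighting N a W y z \<longleftrightarrow>
     0 < a \<and> pos_lengths W \<and> y \<in> wleaves W \<and> z \<in> wleaves W \<and> y \<noteq> z \<and>
     real (card (wleaves W)) \<le> N \<and>
     (\<exists>a' W'. induce_e (- {y}) a W = Some (a', W') \<and>
        swap_profile N (planted_FP a W) (planted_FP a' W') (wleaves W) y z)"

lemma swapping_weighting_cherry:
  assumes "y \<noteq> z" "2 \<le> N"
  shows "swapping_weighting N (8*N) (WNode 1 (WLeaf y) 2 (WLeaf z)) y z"
proof -
  have "induce_e (- {y}) (8*N) (WNode 1 (WLeaf y) 2 (WLeaf z)) = Some (8*N + 2, WLeaf z)"
    using assms by simp
  moreover have "card {y, z} = 2" using assms by simp
  ultimately show ?thesis
    using assms by (simp add: swapping_weighting_def swap_profile_def planted_FP_def)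
qed

lemma swapping_weighting_sibling:
  fixes N h :: real
  assumes weighting: "swapping_weighting N aT T y z"
    and H: "pos_lengths H" "inj_on (FP H) (wleaves H)" "\<forall>x \<in> wleaves H. 0 \<le> FP H x \<and> FP H x < 1"
    and disj: "wleaves T \<inter> wleaves H = {}"
    and size: "real (card (wleaves T) + card (wleaves H)) \<le> N"
    and h: "h = card (wleaves H) * (5*N + 3 * card (wleaves T) + 1)"
      \<comment> \<open>lifts the leaves of H to the band just above all leaves of T\<close>
    and P: "P \<in> {WNode aT T h H, WNode h H aT T}"
  shows "swapping_weighting N 1 P y z"
proof -
  obtain a' T' where ind: "induce_e (- {y}) aT T = Some (a', T')"
    and profile: "swap_profile N (planted_FP aT T) (planted_FP a' T') (wleaves T) y z"
    and T: "0 < aT" "pos_lengths T" "y \<in> wleaves T" "z \<in> wleaves T" "y \<noteq> z"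
    using weighting unfolding swapping_weighting_def by blast
  define k m c where "k = card (wleaves T)" and "m = card (wleaves H)"
    and "c = 5*N + 3 * k + 1"
  have "1 \<le> k" "1 \<le> m"
    using T(3) wleaves_nonempty by (auto simp: k_def m_def Suc_le_eq card_gt_0_iff)
  then have "0 < c" "h = m * c" using size by (simp_all add: c_def k_def m_def h)
  then have h_pos: "0 < h" and planted_H: "planted_FP h H x = c + FP H x" for x
    using \<open>1 \<le> m\<close> by (simp_all add: planted_FP_def m_def wleaves_nonempty)
  have y_H: "y \<notin> wleaves H" using T(3) disj by blast
  then have "induce_e (- {y}) h H = Some (h, H)" by (intro induce_e_all) blast
  then obtain P' where ind_P: "induce_e (- {y}) 1 P = Some (1, P')"
    and P': "P' \<in> {WNode a' T' h H, WNode h H a' T'}"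
    using P ind by auto
  have leaves_T': "wleaves T' = wleaves T - {y}"
    using wleaves_induce_e[OF ind] by blast
  then have disj': "wleaves T' \<inter> wleaves H = {}" "card (wleaves T') = k - 1"
    using disj T(3) by (auto simp: k_def)
  have P_sym: "P \<in> {WNode h H aT T, WNode aT T h H}" and P'_sym: "P' \<in> {WNode h H a' T', WNode a' T' h H}"
    using P P' by auto
  have "swap_profile N (planted_FP 1 P) (planted_FP 1 P') (wleaves T \<union> wleaves H) y z"
  proof (rule swap_profile_extend[OF profile T(3-5) _ _ disj wleaves_nonempty size H(2,3)])
    show "planted_FP 1 P x = 1 / (k + m) + planted_FP aT T x" if "x \<in> wleaves T" for x
      using planted_FP_WNode_sibling[OF P disj that] by (simp add: k_def m_def)
    show "planted_FP 1 P x = 1 / (k + m) + c + FP H x" if "x \<in> wleaves H" for x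
      using planted_FP_WNode_sibling[OF P_sym _ that] disj planted_H
      by (simp add: k_def m_def Int_commute add.commute)
    show "planted_FP 1 P' x = 1 / (k - 1 + m) + planted_FP a' T' x" if "x \<in> wleaves T - {y}" for x
      using planted_FP_WNode_sibling[OF P' disj'(1)] that leaves_T' disj'(2) by (simp add: m_def)
    show "planted_FP 1 P' x = 1 / (k - 1 + m) + c + FP H x" if "x \<in> wleaves H" for x
      using planted_FP_WNode_sibling[OF P'_sym _ that] disj'(1,2) planted_H
      by (simp add: m_def Int_commute add.commute)
  qed (use \<open>1 \<le> k\<close> \<open>1 \<le> m\<close> in \<open>auto simp: c_def k_def divide_le_eq\<close>)
  moreover have "wleaves P = wleaves T \<union> wleaves H" "pos_lengths P"
    using P T(1,2) H(1) h_pos by auto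
  ultimately show ?thesis
    using ind_P T size by (auto simp: swapping_weighting_def card_Un_disjoint disj)
qed

lemma swapping_weighting_extend:
  assumes weighting: "swapping_weighting N aT T y z" and R: "distinct (tleaves R)"
    and "wleaves T \<inter> set (tleaves R) = {}"
    and "real (card (wleaves T) + length (tleaves R)) \<le> N"
    and S: "S \<in> {Node (shape T) R, Node R (shape T)}"
  shows "\<exists>W. shape W = S \<and> swapping_weighting N 1 W y z"
proof -
  obtain H where H: "shape H = R" "pos_lengths H" "inj_on (FP H) (wleaves H)"
      "\<forall>x \<in> wleaves H. 0 \<le> FP H x \<and> FP H x < 1"
    using exists_injective_weighting_below[OF R, of 1] by auto
  have "wleaves H = set (tleaves R)" "card (wleaves H) = length (tleaves R)"
    using H(1) R set_tleaves_shape[of H] card_wleaves_eq_length[of H] by auto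
  then have disj: "wleaves T \<inter> wleaves H = {}"
    and size: "real (card (wleaves T) + card (wleaves H)) \<le> N"
    using assms(3,4) by simp_all
  define h :: real where "h = card (wleaves H) * (5*N + 3 * card (wleaves T) + 1)"
  obtain P where P: "P \<in> {WNode aT T h H, WNode h H aT T}" and "shape P = S"
  proof (cases "S = Node (shape T) R")
    case True
    then show ?thesis using H(1) by (intro that[of "WNode aT T h H"]) auto
  next
    case False
    then show ?thesis using S H(1) by (intro that[of "WNode h H aT T"]) auto
  qed
  moreover have "swapping_weighting N 1 P y z"
    by (rule swapping_weighting_sibling[OF weighting H(2-4) disj size h_def P])
  ultimately show ?thesis by blast
qed

lemma exists_swapping_weighting:
  assumes "distinct (tleaves S)" "2 \<le> length (tleaves S)" "real (length (tleaves S)) \<le> N"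
  shows "\<exists>W a y z. shape W = S \<and> swapping_weighting N a W y z"
  using assms
proof (induction S)
  case (Node l r)
  have l: "distinct (tleaves l)" and r: "distinct (tleaves r)"
    and disj: "set (tleaves l) \<inter> set (tleaves r) = {}"
    and size: "real (length (tleaves l) + length (tleaves r)) \<le> N"
    using Node.prems by auto
  consider (cherry) u v where "l = Leaf u" "r = Leaf v"
    | (left) "2 \<le> length (tleaves l)" | (right) "2 \<le> length (tleaves r)"
  proof (cases "2 \<le> length (tleaves l) \<or> 2 \<le> length (tleaves r)")
    case True
    then show thesis using that(2,3) by blast
  next
    case False
    then have "length (tleaves l) \<le> 1" "length (tleaves r) \<le> 1" by auto
    then obtain u v where "l = Leaf u" "r = Leaf v"
      by (metis length_tleaves_le_1E)
    then show thesis by (rule that(1))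
  qed
  then show ?case
  proof cases
    case cherry
    then have "u \<noteq> v" "2 \<le> N" using Node.prems by auto
    then have "swapping_weighting N (8*N) (WNode 1 (WLeaf u) 2 (WLeaf v)) u v"
      by (rule swapping_weighting_cherry)
    moreover have "shape (WNode 1 (WLeaf u) 2 (WLeaf v)) = Node l r" using cherry by simp
    ultimately show ?thesis by blast
  next
    case left
    moreover have "real (length (tleaves l)) \<le> N" using size by simp
    ultimately obtain T a y z where T: "shape T = l" "swapping_weighting N a T y z"
      using Node.IH(1) l by blast
    then have "wleaves T = set (tleaves l)" "card (wleaves T) = length (tleaves l)"
      using l set_tleaves_shape[of T] card_wleaves_eq_length[of T] by auto
    then have "\<exists>W. shape W = Node l r \<and> swapping_weighting N 1 W y z"
      using swapping_weighting_extend[OF T(2) r] T(1) disj size by simp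
    then show ?thesis by blast
  next
    case right
    moreover have "real (length (tleaves r)) \<le> N" using size by simp
    ultimately obtain T a y z where T: "shape T = r" "swapping_weighting N a T y z"
      using Node.IH(2) r by blast
    then have "wleaves T = set (tleaves r)" "card (wleaves T) = length (tleaves r)"
      using r set_tleaves_shape[of T] card_wleaves_eq_length[of T] by auto
    then have "\<exists>W. shape W = Node l r \<and> swapping_weighting N 1 W y z"
      using swapping_weighting_extend[OF T(2) l] T(1) disj size by (simp add: Int_commute)
    then show ?thesis by blast
  qed
qed simp

lemma swapping_weighting_FP_ranking:
  assumes "swapping_weighting (card (wleaves W)) a W y z"
  shows "pos_lengths W \<and> inj_on (FP W) (wleaves W) \<and>
    (\<exists>y \<in> wleaves W. (\<forall>x \<in> wleaves W - {y}. FP W y < FP W x) \<and>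
       (\<exists>Wt. induce (wleaves W - {y}) W = Some Wt \<and>
          inj_on (FP Wt) (wleaves W - {y}) \<and>
          (\<exists>z \<in> wleaves W - {y}.
             (\<forall>x \<in> wleaves W - {y, z}. FP W z < FP W x) \<and>
             (\<forall>x \<in> wleaves W - {y, z}. FP Wt x < FP Wt z))))"
proof -
  obtain a' W' where W: "pos_lengths W" "y \<in> wleaves W" "z \<in> wleaves W" "y \<noteq> z"
    and ind: "induce_e (- {y}) a W = Some (a', W')"
    and profile: "swap_profile (card (wleaves W)) (planted_FP a W) (planted_FP a' W') (wleaves W) y z"
    using assms unfolding swapping_weighting_def by blast
  have "planted_FP a W z < planted_FP a W x \<and> planted_FP a' W' x < planted_FP a' W' z"
    if "x \<in> wleaves W - {y, z}" for x
  proof -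
    have "planted_FP a W z \<le> 5 * card (wleaves W)" "5 * card (wleaves W) < planted_FP a W x"
      "8 * card (wleaves W) + 2 \<le> planted_FP a' W' z"
      "planted_FP a' W' x < 8 * card (wleaves W)"
      using profile that unfolding swap_profile_def by auto
    then show ?thesis by linarith
  qed
  then have order: "FP W y < FP W z" "\<forall>x \<in> wleaves W - {y, z}. FP W z < FP W x"
    "\<forall>x \<in> wleaves W - {y, z}. FP W' x < FP W' z"
    using profile unfolding swap_profile_def by auto
  have y_min: "\<forall>x \<in> wleaves W - {y}. FP W y < FP W x"
  proof
    fix x assume "x \<in> wleaves W - {y}"
    then show "FP W y < FP W x"
      using order(1) order(2)[rule_format, of x] by (cases "x = z") auto
  qed
  define R where "R = wleaves W - {y, z}"
  have leaves: "wleaves W = insert y (insert z R)" "wleaves W - {y} = insert z R"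
    using W by (auto simp: R_def)
  have inj_R: "inj_on (FP W) R" "inj_on (FP W') R"
    using profile unfolding swap_profile_def R_def by simp_all
  have "inj_on (FP W) (insert z R)"
    using inj_R(1) order(2) unfolding R_def by (rule inj_on_insert_below)
  then have "inj_on (FP W) (insert y (insert z R))"
    using y_min unfolding leaves(2) by (rule inj_on_insert_below)
  moreover have "inj_on (FP W') (insert z R)"
    using inj_R(2) order(3) unfolding R_def by (rule inj_on_insert_above)
  ultimately have inj: "inj_on (FP W) (wleaves W)" "inj_on (FP W') (wleaves W - {y})"
    unfolding leaves(2) by (simp_all only: leaves(1)[symmetric])
  have "induce (wleaves W - {y}) W = map_option snd (induce_e (wleaves W - {y}) a W)"
    by (rule induce_conv_induce_e)
  also have "induce_e (wleaves W - {y}) a W = induce_e (- {y}) a W"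
    by (rule induce_e_cong) auto
  finally have "induce (wleaves W - {y}) W = Some W'"
    using ind by simp
  then show ?thesis
    using W(1-4) y_min inj order by blast
qed

theorem theorem3:
  fixes T :: "'a tree"
  assumes "distinct (tleaves T)"
    and "length (tleaves T) \<ge> 2"
  shows "\<exists>W. shape W = T \<and> pos_lengths W \<and>
           inj_on (FP W) (wleaves W) \<and>
           (\<exists>y \<in> wleaves W. (\<forall>x \<in> wleaves W - {y}. FP W y < FP W x) \<and>
              (\<exists>Wt. induce (wleaves W - {y}) W = Some Wt \<and>
                    inj_on (FP Wt) (wleaves W - {y}) \<and>
                    (\<exists>z \<in> wleaves W - {y}.
                        (\<forall>x \<in> wleaves W - {y, z}. FP W z < FP W x) \<and>
                        (\<forall>x \<in> wleaves W - {y, z}. FP Wt x < FP Wt z))))"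
proof -
  obtain W a y z where W: "shape W = T"
    and "swapping_weighting (length (tleaves T)) a W y z"
    using exists_swapping_weighting[OF assms, of "length (tleaves T)"] by auto
  moreover have "card (wleaves W) = length (tleaves T)"
    using W assms(1) card_wleaves_eq_length by blast
  ultimately have "swapping_weighting (card (wleaves W)) a W y z" by simp
  from swapping_weighting_FP_ranking[OF this] W show ?thesis by blast
qed

end
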